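(* Let $G(\vec x,\vec y)$ be a propositional formula over Boolean variables $\vec x=(x_0,\dots,x_{m-1})$ and $\vec y=(y_0,\dots,y_{n-1})$, and let $\psi \equiv \exists \vec x.\,\forall \vec y.\, G(\vec x,\vec y)$. Let $\mathit{enc}:\mathbb{B}^m\to[0,2^m-1]$ be the standard binary encoding with $x_0$ the lowest-order bit, and for $\vec x \neq \top^m$ (the all-true vector) let $\mathit{succ}(\vec x)$ be the unique vector with $\mathit{enc}(\mathit{succ}(\vec x)) = \mathit{enc}(\vec x)+1$. Consider the transition system with state space $\mathbb{B}^m\times\mathbb{B}$ (states $(\vec x,o)$), initial condition $I \equiv (\vec x=\bot^m \land o=\bot)$, and transition relation $$\tau(\vec x,o,\vec x',o') \equiv \Big(\lnot(\forall \vec y.\,G(\vec x,\vec y)) \land \big((\vec x\neq\top^m \land \vec x'=\mathit{succ}(\vec x)\land o'=o)\lor(\vec x=\top^m\land o'=\top)\big)\Big) \lor \big(\vec x'=\vec x\land o'=o\big).$$ Then there exists an inductive invariant $R\subseteq \mathbb{B}^m\times\mathbb{B}$ of this system with $R\neq \mathbb{B}^m\times\mathbb{B}$ if and only if $\psi$ is true. *)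

theory Defs
  imports Main
begin

datatype pform = PX nat | PY nat | PTrue | PFalse
  | PNot pform | PAnd pform pform | POr pform pform

fun peval :: "pform \<Rightarrow> bool list \<Rightarrow> bool list \<Rightarrow> bool" where
  "peval (PX i) xs ys = xs ! i"
| "peval (PY j) xs ys = ys ! j"
| "peval PTrue xs ys = True"
| "peval PFalse xs ys = False"
| "peval (PNot f) xs ys = (\<not> peval f xs ys)"
| "peval (PAnd f g) xs ys = (peval f xs ys \<and> peval g xs ys)"
| "peval (POr f g) xs ys = (peval f xs ys \<or> peval g xs ys)"

fun vars_ok :: "nat \<Rightarrow> nat \<Rightarrow> pform \<Rightarrow> bool" where
  "vars_ok m n (PX i) = (i < m)"
| "vars_ok m n (PY j) = (j < n)"
| "vars_ok m n PTrue = True"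
| "vars_ok m n PFalse = True"
| "vars_ok m n (PNot f) = vars_ok m n f"
| "vars_ok m n (PAnd f g) = (vars_ok m n f \<and> vars_ok m n g)"
| "vars_ok m n (POr f g) = (vars_ok m n f \<and> vars_ok m n g)"

definition psi :: "nat \<Rightarrow> nat \<Rightarrow> pform \<Rightarrow> bool" where
  "psi m n G = (\<exists>xs. length xs = m \<and> (\<forall>ys. length ys = n \<longrightarrow> peval G xs ys))"

definition enc :: "bool list \<Rightarrow> nat" where
  "enc xs = (\<Sum>i<length xs. if xs ! i then 2 ^ i else 0)"

definition succ_vec :: "nat \<Rightarrow> bool list \<Rightarrow> bool list" where
  "succ_vec m xs = (THE ys. length ys = m \<and> enc ys = enc xs + 1)"

definition state_space :: "nat \<Rightarrow> (bool list \<times> bool) set" where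
  "state_space m = {xs. length xs = m} \<times> UNIV"

definition init_states :: "nat \<Rightarrow> (bool list \<times> bool) set" where
  "init_states m = {(replicate m False, False)}"

definition trans :: "nat \<Rightarrow> nat \<Rightarrow> pform \<Rightarrow> bool list \<times> bool \<Rightarrow> bool list \<times> bool \<Rightarrow> bool" where
  "trans m n G s s' = (case s of (xs, o1) \<Rightarrow> case s' of (xs', o1') \<Rightarrow>
      ((\<not> (\<forall>ys. length ys = n \<longrightarrow> peval G xs ys)) \<and>
         ((xs \<noteq> replicate m True \<and> xs' = succ_vec m xs \<and> o1' = o1)
          \<or> (xs = replicate m True \<and> o1' = True)))
      \<or> (xs' = xs \<and> o1' = o1))"

definition inductive_invariant :: "nat \<Rightarrow> nat \<Rightarrow> pform \<Rightarrow> (bool list \<times> bool) set \<Rightarrow> bool" where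
  "inductive_invariant m n G R \<longleftrightarrow>
     R \<subseteq> state_space m \<and> init_states m \<subseteq> R \<and>
     (\<forall>s\<in>R. \<forall>s'\<in>state_space m. trans m n G s s' \<longrightarrow> s' \<in> R)"

end

theory Submission
  imports Defs
begin

text \<open>If no x wins, every state x (with o = False) has the counter successor as a
  transition, so any invariant containing the initial state climbs through all 2^m
  counter values; from the top vector it may jump to every state with o = True.
  Conversely, if x0 wins, the states (x, False) with enc x \<le> enc x0 form an invariant:
  the counter cannot move past x0, because a winning state has only the stutter step,
  and o = True is never reached.\<close>

lemma enc_Nil [simp]: "enc [] = 0"
  by (simp add: enc_def)

lemma enc_Cons [simp]: "enc (x # xs) = (if x then 1 else 0) + 2 * enc xs"
proof -
  have "enc (x # xs) = (\<Sum>i<Suc (length xs). if (x # xs) ! i then 2 ^ i else 0)"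
    by (simp add: enc_def del: sum.lessThan_Suc)
  also have "\<dots> = (if x then 1 else 0) + (\<Sum>i<length xs. if xs ! i then 2 ^ Suc i else 0)"
    by (subst sum.lessThan_Suc_shift) simp
  also have "(\<Sum>i<length xs. if xs ! i then 2 ^ Suc i else 0) = 2 * enc xs"
    unfolding enc_def sum_distrib_left by (rule sum.cong) auto
  finally show ?thesis .
qed

fun dec :: "nat \<Rightarrow> nat \<Rightarrow> bool list" where
  "dec 0 k = []"
| "dec (Suc m) k = odd k # dec m (k div 2)"

lemma length_dec [simp]: "length (dec m k) = m"
  by (induction m arbitrary: k) auto

lemma enc_less: "enc xs < 2 ^ length xs"
  by (induction xs) auto

lemma enc_dec: "enc (dec m k) = k mod 2 ^ m"
proof (induction m arbitrary: k)
  case 0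
  then show ?case by simp
next
  case (Suc m)
  have "k mod 2 ^ Suc m = k mod 2 + 2 * (k div 2 mod 2 ^ m)"
    by (simp add: mod_mult2_eq mult.commute)
  then show ?case
    using Suc by (auto simp: odd_iff_mod_2_eq_one even_iff_mod_2_eq_zero)
qed

lemma dec_enc: "dec (length xs) (enc xs) = xs"
  by (induction xs) auto

lemma enc_inject: "length xs = length ys \<Longrightarrow> enc xs = enc ys \<Longrightarrow> xs = ys"
  by (metis dec_enc)

lemma enc_replicate_False [simp]: "enc (replicate m False) = 0"
  by (induction m) auto

lemma enc_replicate_True: "enc (replicate m True) = 2 ^ m - 1"
proof (induction m)
  case 0
  then show ?case by simp
next
  case (Suc m)
  obtain k where "(2::nat) ^ m = Suc k"
    using not0_implies_Suc by (metis power_not_zero zero_neq_numeral)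
  with Suc show ?case by simp
qed

lemma enc_Suc_less_iff_not_top:
  assumes "length xs = m"
  shows "enc xs + 1 < 2 ^ m \<longleftrightarrow> xs \<noteq> replicate m True"
proof -
  have "enc xs < 2 ^ m"
    using enc_less assms by auto
  moreover have "enc xs = 2 ^ m - 1 \<longleftrightarrow> xs = replicate m True"
  proof
    assume "enc xs = 2 ^ m - 1"
    then show "xs = replicate m True"
      using enc_inject[of xs "replicate m True"] assms enc_replicate_True by simp
  qed (simp add: enc_replicate_True)
  ultimately show ?thesis by linarith
qed

lemma succ_vec_eq_dec:
  assumes "length xs = m" "xs \<noteq> replicate m True"
  shows "succ_vec m xs = dec m (enc xs + 1)"
  unfolding succ_vec_def
proof (rule the_equality)
  show "length (dec m (enc xs + 1)) = m \<and> enc (dec m (enc xs + 1)) = enc xs + 1"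
    using assms enc_Suc_less_iff_not_top[OF assms(1)] by (simp add: enc_dec)
next
  fix ys
  assume "length ys = m \<and> enc ys = enc xs + 1"
  then show "ys = dec m (enc xs + 1)" by (metis dec_enc)
qed

abbreviation winning :: "nat \<Rightarrow> pform \<Rightarrow> bool list \<Rightarrow> bool" where
  "winning n G xs \<equiv> \<forall>ys. length ys = n \<longrightarrow> peval G xs ys"

lemma trans_succ:
  assumes "\<not> winning n G xs" "length xs = m" "xs \<noteq> replicate m True"
  shows "trans m n G (xs, o1) (dec m (enc xs + 1), o1)"
  using assms succ_vec_eq_dec[OF assms(2,3)] by (simp add: trans_def)

lemma trans_top:
  assumes "\<not> winning n G (replicate m True)"
  shows "trans m n G (replicate m True, o1) (xs', True)"
  using assms by (simp add: trans_def)

lemma trans_from_winning: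
  assumes "winning n G xs" "trans m n G (xs, o1) s'"
  shows "s' = (xs, o1)"
  using assms by (auto simp: trans_def)

lemma trans_from_losing:
  assumes "\<not> winning n G xs" "length xs = m" "xs \<noteq> replicate m True"
    "trans m n G (xs, o1) (xs', o1')"
  shows "o1' = o1 \<and> (xs' = xs \<or> xs' = dec m (enc xs + 1))"
  using assms succ_vec_eq_dec[OF assms(2,3)] by (auto simp: trans_def)

lemma inductive_invariant_eq_state_space:
  assumes "\<not> psi m n G" and inv: "inductive_invariant m n G R"
  shows "R = state_space m"
proof -
  have losing: "\<not> winning n G xs" if "length xs = m" for xs
    using assms(1) that unfolding psi_def by blast
  have init: "(replicate m False, False) \<in> R"
    and step: "\<And>s s'. s \<in> R \<Longrightarrow> s' \<in> state_space m \<Longrightarrow> trans m n G s s' \<Longrightarrow> s' \<in> R"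
    using inv unfolding inductive_invariant_def init_states_def by auto
  have counter: "(dec m k, False) \<in> R" if "k < 2 ^ m" for k
    using that
  proof (induction k)
    case 0
    then show ?case
      using init dec_enc[of "replicate m False"] by simp
  next
    case (Suc k)
    have "enc (dec m k) = k"
      using Suc.prems by (simp add: enc_dec)
    moreover have "dec m k \<noteq> replicate m True"
      using Suc.prems enc_Suc_less_iff_not_top[of "dec m k" m] \<open>enc (dec m k) = k\<close> by simp
    ultimately have "trans m n G (dec m k, False) (dec m (Suc k), False)"
      using trans_succ[OF losing[of "dec m k"], of m False] by simp
    then show ?case
      using step Suc by (auto simp: state_space_def)
  qed
  have off: "(xs, False) \<in> R" if "length xs = m" for xs
    using counter[of "enc xs"] enc_less[of xs] dec_enc[of xs] that by simp
  have on: "(xs, True) \<in> R" if "length xs = m" for xs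
  proof -
    have "trans m n G (replicate m True, False) (xs, True)"
      using trans_top losing[of "replicate m True"] by simp
    then show ?thesis
      using step off[of "replicate m True"] that by (simp add: state_space_def)
  qed
  have "state_space m \<subseteq> R"
  proof
    fix s
    assume "s \<in> state_space m"
    then obtain xs b where "s = (xs, b)" "length xs = m"
      by (auto simp: state_space_def)
    then show "s \<in> R"
      using off on by (cases b) auto
  qed
  then show ?thesis
    using inv unfolding inductive_invariant_def by blast
qed

lemma inductive_invariant_below_winning:
  assumes "length xs0 = m" "winning n G xs0"
  shows "inductive_invariant m n G {(xs, False) | xs. length xs = m \<and> enc xs \<le> enc xs0}"
    (is "inductive_invariant m n G ?R")
  unfolding inductive_invariant_def
proof (intro conjI ballI impI)
  show "?R \<subseteq> state_space m" "init_states m \<subseteq> ?R"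
    by (auto simp: state_space_def init_states_def)
next
  fix s s'
  assume "s \<in> ?R" "s' \<in> state_space m" and t: "trans m n G s s'"
  then obtain xs xs' o1' where s: "s = (xs, False)" "length xs = m" "enc xs \<le> enc xs0"
    and s': "s' = (xs', o1')" "length xs' = m"
    by (auto simp: state_space_def)
  show "s' \<in> ?R"
  proof (cases "winning n G xs")
    case True
    then show ?thesis
      using trans_from_winning t s \<open>s \<in> ?R\<close> by blast
  next
    case False
    then have "enc xs < enc xs0"
      using assms s enc_inject by (metis le_neq_implies_less)
    moreover have "enc xs0 < 2 ^ m"
      using enc_less assms(1) by auto
    ultimately have "xs \<noteq> replicate m True"
      using enc_Suc_less_iff_not_top[OF s(2)] by simp
    then have "o1' = False \<and> (xs' = xs \<or> xs' = dec m (enc xs + 1))"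
      using trans_from_losing[OF False s(2)] t s s' by blast
    then show ?thesis
      using s s' \<open>enc xs < enc xs0\<close> \<open>enc xs0 < 2 ^ m\<close> by (auto simp: enc_dec)
  qed
qed

theorem mainTheorem2:
  fixes m n :: nat and G :: pform
  assumes "vars_ok m n G"
  shows "(\<exists>R. inductive_invariant m n G R \<and> R \<noteq> state_space m) \<longleftrightarrow> psi m n G"
proof
  assume "\<exists>R. inductive_invariant m n G R \<and> R \<noteq> state_space m"
  then show "psi m n G"
    using inductive_invariant_eq_state_space by blast
next
  assume "psi m n G"
  then obtain xs0 where "length xs0 = m" "winning n G xs0"
    unfolding psi_def by blast
  moreover have "(replicate m False, True) \<in> state_space m"
    by (simp add: state_space_def)
  ultimately show "\<exists>R. inductive_invariant m n G R \<and> R \<noteq> state_space m"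
    using inductive_invariant_below_winning by blast
qed

end
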